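(* Let $\mathcal{I}$ be an interval hypergraph on $[n]$ and $A,B$ acyclic orientations of $\mathcal{I}$. Then $A\le B$ in $P_{\mathcal{I}}$ if and only if $A(I)\le B(I)$ for all $I\in\mathcal{I}$.
   Context: An interval hypergraph $\mathcal{I}$ on $[n]$ is a collection of intervals of $[n]$ containing all singletons. An orientation is a map $O:\mathcal{I}\to[n]$ with $O(I)\in I$; it is acyclic if there are no $H_1,\dots,H_k\in\mathcal{I}$, $k\ge2$, with $O(H_{i+1})\in H_i\setminus\{O(H_i)\}$ for $i\in[k-1]$ and $O(H_1)\in H_k\setminus\{O(H_k)\}$. Orientations $O\ne O'$ are related by an increasing flip (from $O$ to $O'$) if there exist $1\le i<j\le n$ such that for all $H$: if $O(H)\ne O'(H)$ then $O(H)=i$, $O'(H)=j$; and if $\{i,j\}\subseteq H$ then $O(H)=i\iff O'(H)=j$. $P_{\mathcal{I}}$ is the transitive closure of the increasing flip relation on the acyclic orientations of $\mathcal{I}$. *)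

theory Defs
  imports Main "HOL-Library.FuncSet"
begin

definition is_interval :: "nat \<Rightarrow> nat set \<Rightarrow> bool" where
  "is_interval n H \<longleftrightarrow> (\<exists>a b. 1 \<le> a \<and> a \<le> b \<and> b \<le> n \<and> H = {a..b})"

definition interval_hypergraph :: "nat \<Rightarrow> nat set set \<Rightarrow> bool" where
  "interval_hypergraph n \<I> \<longleftrightarrow> (\<forall>H\<in>\<I>. is_interval n H) \<and> (\<forall>i\<in>{1..n}. {i} \<in> \<I>)"

definition orientation :: "nat set set \<Rightarrow> (nat set \<Rightarrow> nat) \<Rightarrow> bool" where
  "orientation \<I> R \<longleftrightarrow> R \<in> extensional \<I> \<and> (\<forall>H\<in>\<I>. R H \<in> H)"

definition acyclic_orientation :: "nat set set \<Rightarrow> (nat set \<Rightarrow> nat) \<Rightarrow> bool" where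
  "acyclic_orientation \<I> R \<longleftrightarrow> orientation \<I> R \<and>
     \<not> (\<exists>Hs. length Hs \<ge> 2 \<and> set Hs \<subseteq> \<I> \<and>
          (\<forall>i. Suc i < length Hs \<longrightarrow> R (Hs ! Suc i) \<in> Hs ! i - {R (Hs ! i)}) \<and>
          R (Hs ! 0) \<in> last Hs - {R (last Hs)})"

definition increasing_flip :: "nat set set \<Rightarrow> (nat set \<Rightarrow> nat) \<Rightarrow> (nat set \<Rightarrow> nat) \<Rightarrow> bool" where
  "increasing_flip \<I> R Q \<longleftrightarrow> R \<noteq> Q \<and>
     (\<exists>i j. 1 \<le> i \<and> i < j \<and>
        (\<forall>H\<in>\<I>. (R H \<noteq> Q H \<longrightarrow> R H = i \<and> Q H = j) \<and>
                 ({i, j} \<subseteq> H \<longrightarrow> (R H = i \<longleftrightarrow> Q H = j))))"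

definition flip_rel :: "nat set set \<Rightarrow> ((nat set \<Rightarrow> nat) \<times> (nat set \<Rightarrow> nat)) set" where
  "flip_rel \<I> = {(R, Q). acyclic_orientation \<I> R \<and> acyclic_orientation \<I> Q \<and> increasing_flip \<I> R Q}"

definition P_le :: "nat set set \<Rightarrow> (nat set \<Rightarrow> nat) \<Rightarrow> (nat set \<Rightarrow> nat) \<Rightarrow> bool" where
  "P_le \<I> A B \<longleftrightarrow> (A, B) \<in> (flip_rel \<I>)\<^sup>*"

end

theory Submission
  imports Defs
begin

(* Increasing flips only raise an orientation pointwise, which gives one direction.
   Conversely, let A \<le> B pointwise with A \<noteq> B, let i be the largest value A H over the
   hyperedges with A H < B H, and let c = B H for such an H with A H = i; A and B agree on
   every hyperedge oriented above i.  Then i \<rightarrow> c is an arc of A, and a vertex j minimal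
   among those on A-paths from i to c gives a covering arc i \<rightarrow> j with j > i.  Redirecting
   to j every hyperedge that A orients at i and that contains j is an increasing flip to an
   acyclic orientation A'.  The A-path from j to c stays above i, hence is also a B-path,
   and with the B-arc c \<rightarrow> i it forbids B to orient a hyperedge containing i and j below j;
   so A' \<le> B, and induction on the sum of B - A concludes. *)

lemma acyclic_trancl_rtrancl_not_sym:
  "acyclic r \<Longrightarrow> (x, y) \<in> r\<^sup>+ \<Longrightarrow> (y, x) \<notin> r\<^sup>*"
  by (auto simp: acyclic_def dest: trancl_rtrancl_trancl)

lemma acyclic_if_rank:
  assumes "\<And>x y. (x, y) \<in> r \<Longrightarrow> (\<rho> x :: nat) < \<rho> y"
  shows "acyclic r"
proof (rule acyclic_subset)
  show "acyclic (inv_image less_than \<rho>)" by (intro wf_acyclic wf_inv_image wf_less_than)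
  show "r \<subseteq> inv_image less_than \<rho>" using assms by auto
qed

definition ancestor_count :: "('a \<times> 'a) set \<Rightarrow> 'a \<Rightarrow> nat" where
  "ancestor_count r x = card {z. (z, x) \<in> r\<^sup>+}"

lemma ancestor_count_less:
  assumes "finite r" "acyclic r" "(x, y) \<in> r\<^sup>+"
  shows "ancestor_count r x < ancestor_count r y"
  unfolding ancestor_count_def
proof (rule psubset_card_mono)
  have "{z. (z, y) \<in> r\<^sup>+} \<subseteq> Domain r" by (auto dest: tranclD)
  then show "finite {z. (z, y) \<in> r\<^sup>+}"
    using assms(1) by (meson finite_Domain finite_subset)
  have "{z. (z, x) \<in> r\<^sup>+} \<subseteq> {z. (z, y) \<in> r\<^sup>+}"
    by (auto dest: trancl_trans[OF _ assms(3)])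
  moreover have "x \<in> {z. (z, y) \<in> r\<^sup>+} - {z. (z, x) \<in> r\<^sup>+}"
    using assms(2,3) by (simp add: acyclic_def)
  ultimately show "{z. (z, x) \<in> r\<^sup>+} \<subset> {z. (z, y) \<in> r\<^sup>+}" by blast
qed

text \<open>Among the vertices on paths from \<open>i\<close> to \<open>c\<close>, one that is minimal for the path order
  is the head of a covering arc out of \<open>i\<close>.\<close>
lemma exists_covering_arc:
  assumes "finite r" "acyclic r" "(i, c) \<in> r\<^sup>+"
  obtains j where "(i, j) \<in> r" "(j, c) \<in> r\<^sup>*" "\<And>k. (i, k) \<in> r\<^sup>+ \<Longrightarrow> (k, j) \<notin> r\<^sup>+"
proof -
  define S where "S = {v. (i, v) \<in> r\<^sup>+ \<and> (v, c) \<in> r\<^sup>*}"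
  have "wf (r\<^sup>+)" using assms(1,2) by (intro wf_trancl finite_acyclic_wf)
  moreover have "c \<in> S" using assms(3) by (simp add: S_def)
  ultimately obtain j where j: "j \<in> S" and min: "\<And>k. (k, j) \<in> r\<^sup>+ \<Longrightarrow> k \<notin> S"
    by (rule wfE_min) blast
  have no_between: "(k, j) \<notin> r\<^sup>+" if "(i, k) \<in> r\<^sup>+" for k
  proof
    assume "(k, j) \<in> r\<^sup>+"
    with j have "(k, c) \<in> r\<^sup>*" by (auto simp: S_def intro: trancl_rtrancl_trancl)
    with that have "k \<in> S" by (simp add: S_def)
    with min \<open>(k, j) \<in> r\<^sup>+\<close> show False by blast
  qed
  from j have "(i, j) \<in> r\<^sup>+" by (simp add: S_def)
  then have "(i, j) \<in> r"
    by (rule tranclE) (use no_between r_into_trancl in blast)+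
  then show ?thesis
    using j no_between by (intro that) (auto simp: S_def)
qed

text \<open>A topological order of \<open>r\<close>, except that the covering arc \<open>i \<rightarrow> j\<close> is reversed: first the
  ancestors of \<open>j\<close> other than \<open>i\<close>, then \<open>j\<close>, then \<open>i\<close>, then all other vertices.\<close>
definition swap_rank :: "('a \<times> 'a) set \<Rightarrow> 'a \<Rightarrow> 'a \<Rightarrow> 'a \<Rightarrow> nat" where
  "swap_rank r i j x =
    (if (x, j) \<in> r\<^sup>+ \<and> x \<noteq> i then ancestor_count r x
     else if x = j then ancestor_count r j
     else if x = i then Suc (ancestor_count r j)
     else ancestor_count r j + 2 + ancestor_count r x)"

lemma swap_rank_less:
  assumes "finite r" "acyclic r" "(i, j) \<in> r"
    and cover: "\<And>k. (i, k) \<in> r\<^sup>+ \<Longrightarrow> (k, j) \<notin> r\<^sup>+"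
    and uv: "(u, v) \<in> r" "(u, v) \<noteq> (i, j)"
  shows "swap_rank r i j u < swap_rank r i j v"
proof -
  let ?h = "ancestor_count r"
  have h_less: "?h x < ?h y" if "(x, y) \<in> r\<^sup>+" for x y
    using assms(1,2) that by (rule ancestor_count_less)
  have irrefl: "(x, x) \<notin> r\<^sup>+" for x using assms(2) by (simp add: acyclic_def)
  show ?thesis
  proof (cases "(v, j) \<in> r\<^sup>*")
    case True
    then have uj: "(u, j) \<in> r\<^sup>+" using uv(1) by simp
    have "u \<noteq> i"
    proof
      assume "u = i"
      with True uv have "(v, j) \<in> r\<^sup>+" by (auto simp: rtrancl_eq_or_trancl)
      moreover have "(i, v) \<in> r\<^sup>+" using \<open>u = i\<close> uv(1) by auto
      ultimately show False using cover by blast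
    qed
    with uj have rank_u: "swap_rank r i j u = ?h u" by (simp add: swap_rank_def)
    consider "(v, j) \<in> r\<^sup>+" "v \<noteq> i" | "v = j" | "v = i"
      using True by (auto simp: rtrancl_eq_or_trancl)
    then show ?thesis
    proof cases
      case 1
      then show ?thesis using rank_u h_less[OF r_into_trancl[OF uv(1)]] by (simp add: swap_rank_def)
    next
      case 2
      then show ?thesis using rank_u h_less[OF uj] irrefl by (simp add: swap_rank_def)
    next
      case 3
      then show ?thesis
        using rank_u h_less[OF uj] irrefl[of i] assms(3) by (auto simp: swap_rank_def)
    qed
  next
    case False
    then have "(v, j) \<notin> r\<^sup>+" "v \<noteq> j" "v \<noteq> i"
      using assms(3) by (auto dest: trancl_into_rtrancl)
    then have rank_v: "swap_rank r i j v = ?h j + 2 + ?h v" by (simp add: swap_rank_def)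
    have "?h u < ?h v" using h_less[OF r_into_trancl[OF uv(1)]] .
    moreover have "swap_rank r i j u \<le> Suc (?h j) \<or> swap_rank r i j u = ?h j + 2 + ?h u"
      using h_less[of u j] by (auto simp: swap_rank_def)
    ultimately show ?thesis using rank_v by linarith
  qed
qed

lemma swap_rank_head_less:
  assumes "acyclic r" "(i, j) \<in> r"
    and cover: "\<And>k. (i, k) \<in> r\<^sup>+ \<Longrightarrow> (k, j) \<notin> r\<^sup>+"
    and v: "v \<noteq> j" "v = i \<or> (i, v) \<in> r"
  shows "swap_rank r i j j < swap_rank r i j v"
proof -
  have irrefl: "(x, x) \<notin> r\<^sup>+" for x using assms(1) by (simp add: acyclic_def)
  then have "i \<noteq> j" using assms(2) by auto
  have rank_j: "swap_rank r i j j = ancestor_count r j"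
    using irrefl by (simp add: swap_rank_def)
  show ?thesis
  proof (cases "v = i")
    case True
    with \<open>i \<noteq> j\<close> show ?thesis by (simp add: rank_j swap_rank_def)
  next
    case False
    with v have "(i, v) \<in> r\<^sup>+" by auto
    with cover False v(1) show ?thesis by (simp add: rank_j swap_rank_def)
  qed
qed

lemma acyclic_redirect_covering_arc:
  assumes "finite r" "acyclic r" "(i, j) \<in> r"
    and cover: "\<And>k. (i, k) \<in> r\<^sup>+ \<Longrightarrow> (k, j) \<notin> r\<^sup>+"
    and arcs: "\<And>u v. (u, v) \<in> s \<Longrightarrow>
      (u, v) \<in> r - {(i, j)} \<or> u = j \<and> v \<noteq> j \<and> (v = i \<or> (i, v) \<in> r)"
  shows "acyclic s"
proof (rule acyclic_if_rank)
  fix u v assume "(u, v) \<in> s"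
  from arcs[OF this] show "swap_rank r i j u < swap_rank r i j v"
    using swap_rank_less[OF assms(1-4), of u v] swap_rank_head_less[OF assms(2-4), of v] by auto
qed

definition orientation_arcs :: "nat set set \<Rightarrow> (nat set \<Rightarrow> nat) \<Rightarrow> (nat \<times> nat) set" where
  "orientation_arcs \<I> R = {(u, v). \<exists>H\<in>\<I>. R H = u \<and> v \<in> H \<and> v \<noteq> u}"

lemma orientation_arcsI:
  "H \<in> \<I> \<Longrightarrow> v \<in> H \<Longrightarrow> v \<noteq> R H \<Longrightarrow> (R H, v) \<in> orientation_arcs \<I> R"
  by (auto simp: orientation_arcs_def)

lemma orientation_arcsE:
  assumes "(u, v) \<in> orientation_arcs \<I> R"
  obtains H where "H \<in> \<I>" "R H = u" "v \<in> H" "v \<noteq> u"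
  using assms by (auto simp: orientation_arcs_def)

lemma interval_hypergraph_subset:
  "interval_hypergraph n \<I> \<Longrightarrow> H \<in> \<I> \<Longrightarrow> H \<subseteq> {1..n}"
  by (auto simp: interval_hypergraph_def is_interval_def)

lemma interval_hypergraph_convex:
  assumes "interval_hypergraph n \<I>" "H \<in> \<I>" "a \<in> H" "b \<in> H" "a \<le> m" "m \<le> b"
  shows "m \<in> H"
  using assms by (fastforce simp: interval_hypergraph_def is_interval_def)

lemma finite_interval_hypergraph:
  assumes "interval_hypergraph n \<I>"
  shows "finite \<I>"
proof (rule finite_subset)
  show "\<I> \<subseteq> Pow {1..n}" using interval_hypergraph_subset[OF assms] by blast
qed simp

lemma finite_orientation_arcs:
  assumes "interval_hypergraph n \<I>" "orientation \<I> R"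
  shows "finite (orientation_arcs \<I> R)"
proof (rule finite_subset)
  show "orientation_arcs \<I> R \<subseteq> {1..n} \<times> {1..n}"
    using assms interval_hypergraph_subset by (fastforce simp: orientation_def elim!: orientation_arcsE)
qed simp

text \<open>Each arc lies in an interval hyperedge containing both of its ends.\<close>
lemma reaches_between:
  assumes "interval_hypergraph n \<I>" "orientation \<I> R"
    and "(x, y) \<in> (orientation_arcs \<I> R)\<^sup>*" "min x y \<le> m" "m \<le> max x y"
  shows "(x, m) \<in> (orientation_arcs \<I> R)\<^sup>*"
  using assms(3-5)
proof (induction arbitrary: m rule: rtrancl_induct)
  case base
  then show ?case by simp
next
  case (step z y)
  show ?case
  proof (cases "min x z \<le> m \<and> m \<le> max x z")
    case True
    with step.IH show ?thesis by blast
  next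
    case False
    from step.hyps(2) obtain H where H: "H \<in> \<I>" "R H = z" "y \<in> H"
      by (auto elim: orientation_arcsE)
    have "z \<in> H" using assms(2) H by (auto simp: orientation_def)
    have "min z y \<le> m" "m \<le> max z y" using False step.prems by auto
    moreover have "min z y \<in> H" "max z y \<in> H" using \<open>z \<in> H\<close> H(3) by (auto simp: min_def max_def)
    ultimately have "m \<in> H" using interval_hypergraph_convex[OF assms(1) H(1)] by blast
    then have "(z, m) \<in> (orientation_arcs \<I> R)\<^sup>="
      using H by (auto intro: orientation_arcsI)
    with step.hyps(1) show ?thesis by auto
  qed
qed

definition arc_chain :: "nat set set \<Rightarrow> (nat set \<Rightarrow> nat) \<Rightarrow> nat set list \<Rightarrow> bool" where
  "arc_chain \<I> R Hs \<longleftrightarrow> set Hs \<subseteq> \<I> \<and>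
     (\<forall>k. Suc k < length Hs \<longrightarrow> R (Hs ! Suc k) \<in> Hs ! k - {R (Hs ! k)})"

lemma arc_chain_snoc:
  assumes "arc_chain \<I> R Hs" "Hs \<noteq> []" "H \<in> \<I>" "R H \<in> last Hs - {R (last Hs)}"
  shows "arc_chain \<I> R (Hs @ [H])"
  unfolding arc_chain_def
proof (intro conjI allI impI)
  show "set (Hs @ [H]) \<subseteq> \<I>" using assms(1,3) by (simp add: arc_chain_def)
  fix k assume k: "Suc k < length (Hs @ [H])"
  show "R ((Hs @ [H]) ! Suc k) \<in> (Hs @ [H]) ! k - {R ((Hs @ [H]) ! k)}"
  proof (cases "Suc k < length Hs")
    case True
    then show ?thesis using assms(1) by (simp add: arc_chain_def nth_append)
  next
    case False
    with k have "k = length Hs - 1" "Suc k = length Hs" by simp_all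
    with assms(2,4) show ?thesis by (simp add: nth_append last_conv_nth)
  qed
qed

lemma trancl_orientation_arcs_chain:
  assumes "(x, y) \<in> (orientation_arcs \<I> R)\<^sup>+"
  shows "\<exists>Hs. Hs \<noteq> [] \<and> arc_chain \<I> R Hs \<and> R (Hs ! 0) = x \<and> y \<in> last Hs - {R (last Hs)}"
  using assms
proof (induction rule: trancl_induct)
  case (base y)
  then obtain H where "H \<in> \<I>" "R H = x" "y \<in> H" "y \<noteq> x" by (auto elim: orientation_arcsE)
  then show ?case by (intro exI[of _ "[H]"]) (simp add: arc_chain_def)
next
  case (step y z)
  then obtain Hs where Hs: "Hs \<noteq> []" "arc_chain \<I> R Hs" "R (Hs ! 0) = x"
    "y \<in> last Hs - {R (last Hs)}" by blast
  from step.hyps(2) obtain H where H: "H \<in> \<I>" "R H = y" "z \<in> H" "z \<noteq> y"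
    by (auto elim: orientation_arcsE)
  have "arc_chain \<I> R (Hs @ [H])" using arc_chain_snoc Hs H by simp
  with Hs H show ?case by (intro exI[of _ "Hs @ [H]"]) (simp add: nth_append)
qed

lemma arc_chain_rtrancl:
  assumes "arc_chain \<I> R Hs" "k < length Hs"
  shows "(R (Hs ! 0), R (Hs ! k)) \<in> (orientation_arcs \<I> R)\<^sup>*"
  using assms(2)
proof (induction k)
  case (Suc k)
  have "Hs ! k \<in> \<I>" "R (Hs ! Suc k) \<in> Hs ! k - {R (Hs ! k)}"
    using assms(1) Suc.prems by (auto simp: arc_chain_def)
  then have "(R (Hs ! k), R (Hs ! Suc k)) \<in> orientation_arcs \<I> R"
    by (auto intro: orientation_arcsI)
  with Suc show ?case by (meson Suc_lessD rtrancl.rtrancl_into_rtrancl)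
qed simp

lemma arc_chain_cycle_not_acyclic:
  assumes "arc_chain \<I> R Hs" "Hs \<noteq> []" "R (Hs ! 0) \<in> last Hs - {R (last Hs)}"
  shows "\<not> acyclic (orientation_arcs \<I> R)"
proof -
  have last: "last Hs = Hs ! (length Hs - 1)" "last Hs \<in> \<I>"
    using assms(1,2) by (auto simp: last_conv_nth arc_chain_def)
  have "(R (Hs ! 0), R (last Hs)) \<in> (orientation_arcs \<I> R)\<^sup>*"
    using arc_chain_rtrancl[OF assms(1), of "length Hs - 1"] assms(2) last by simp
  moreover have "(R (last Hs), R (Hs ! 0)) \<in> orientation_arcs \<I> R"
    using assms(3) last(2) by (auto intro: orientation_arcsI)
  ultimately have "(R (last Hs), R (last Hs)) \<in> (orientation_arcs \<I> R)\<^sup>+"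
    by (rule rtrancl_into_trancl2[rotated])
  then show ?thesis by (auto simp: acyclic_def)
qed

lemma not_acyclic_arc_chain_cycle:
  assumes "\<not> acyclic (orientation_arcs \<I> R)"
  obtains Hs where "2 \<le> length Hs" "arc_chain \<I> R Hs" "R (Hs ! 0) \<in> last Hs - {R (last Hs)}"
proof -
  from assms obtain x where "(x, x) \<in> (orientation_arcs \<I> R)\<^sup>+" by (auto simp: acyclic_def)
  then obtain Hs where Hs: "Hs \<noteq> []" "arc_chain \<I> R Hs" "R (Hs ! 0) = x"
    "x \<in> last Hs - {R (last Hs)}"
    using trancl_orientation_arcs_chain by blast
  have "length Hs \<noteq> 1"
    using Hs by (auto simp: last_conv_nth)
  moreover have "length Hs \<noteq> 0" using Hs(1) by simp
  ultimately have "2 \<le> length Hs" by linarith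
  with Hs show ?thesis by (intro that) auto
qed

lemma acyclic_orientation_iff:
  "acyclic_orientation \<I> R \<longleftrightarrow> orientation \<I> R \<and> acyclic (orientation_arcs \<I> R)"
proof -
  have "(\<exists>Hs. 2 \<le> length Hs \<and> arc_chain \<I> R Hs \<and> R (Hs ! 0) \<in> last Hs - {R (last Hs)})
    \<longleftrightarrow> \<not> acyclic (orientation_arcs \<I> R)"
    using arc_chain_cycle_not_acyclic not_acyclic_arc_chain_cycle
    by (metis list.size(3) not_numeral_le_zero)
  then show ?thesis
    unfolding acyclic_orientation_def arc_chain_def by (simp add: conj_assoc)
qed

lemma orientation_eqI:
  "orientation \<I> R \<Longrightarrow> orientation \<I> Q \<Longrightarrow> (\<And>H. H \<in> \<I> \<Longrightarrow> R H = Q H) \<Longrightarrow> R = Q"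
  by (auto simp: orientation_def intro: extensionalityI)

definition flip_orientation :: "nat set set \<Rightarrow> (nat set \<Rightarrow> nat) \<Rightarrow> nat \<Rightarrow> nat \<Rightarrow> nat set \<Rightarrow> nat" where
  "flip_orientation \<I> R i j = (\<lambda>H. if H \<in> \<I> \<and> R H = i \<and> j \<in> H then j else R H)"

lemma orientation_flip_orientation:
  "orientation \<I> R \<Longrightarrow> orientation \<I> (flip_orientation \<I> R i j)"
  by (auto simp: orientation_def flip_orientation_def extensional_def)

lemma orientation_arcs_flip_orientation:
  assumes "(u, v) \<in> orientation_arcs \<I> (flip_orientation \<I> R i j)"
  shows "(u, v) \<in> orientation_arcs \<I> R - {(i, j)} \<or>
    u = j \<and> v \<noteq> j \<and> (v = i \<or> (i, v) \<in> orientation_arcs \<I> R)"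
proof -
  from assms obtain H where H: "H \<in> \<I>" "flip_orientation \<I> R i j H = u" "v \<in> H" "v \<noteq> u"
    by (rule orientation_arcsE)
  show ?thesis
  proof (cases "R H = i \<and> j \<in> H")
    case True
    with H have "u = j" by (simp add: flip_orientation_def)
    moreover have "v = i \<or> (i, v) \<in> orientation_arcs \<I> R"
      using True orientation_arcsI[OF H(1,3)] by auto
    ultimately show ?thesis using H(4) by blast
  next
    case False
    with H have "u = R H" by (simp add: flip_orientation_def)
    with H have "(u, v) \<in> orientation_arcs \<I> R" by (auto intro: orientation_arcsI)
    moreover have "(u, v) \<noteq> (i, j)" using False H(3) \<open>u = R H\<close> by auto
    ultimately show ?thesis by blast
  qed
qed

lemma increasing_flip_flip_orientation:
  assumes \<I>: "interval_hypergraph n \<I>" and oR: "orientation \<I> R"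
    and ij: "(i, j) \<in> orientation_arcs \<I> R" "(j, i) \<notin> orientation_arcs \<I> R" "i < j"
  shows "increasing_flip \<I> R (flip_orientation \<I> R i j)"
proof -
  let ?R' = "flip_orientation \<I> R i j"
  from ij(1) obtain H0 where H0: "H0 \<in> \<I>" "R H0 = i" "j \<in> H0"
    by (auto elim: orientation_arcsE)
  have "?R' H0 = j" using H0 by (simp add: flip_orientation_def)
  with H0(2) ij(3) have "R \<noteq> ?R'" by auto
  moreover have "1 \<le> i"
  proof -
    have "i \<in> H0" using H0 oR by (auto simp: orientation_def)
    with interval_hypergraph_subset[OF \<I> H0(1)] show ?thesis by auto
  qed
  moreover have "(R H \<noteq> ?R' H \<longrightarrow> R H = i \<and> ?R' H = j) \<and>
      ({i, j} \<subseteq> H \<longrightarrow> (R H = i \<longleftrightarrow> ?R' H = j))" if H: "H \<in> \<I>" for H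
  proof -
    have "R H \<noteq> j" if "i \<in> H"
      using ij(2,3) orientation_arcsI[OF H that, of R] by auto
    with H show ?thesis by (auto simp: flip_orientation_def)
  qed
  ultimately show ?thesis
    unfolding increasing_flip_def using ij(3) by blast
qed

lemma flip_rel_flip_orientation:
  assumes \<I>: "interval_hypergraph n \<I>" and R: "acyclic_orientation \<I> R"
    and ij: "(i, j) \<in> orientation_arcs \<I> R" "i < j"
    and cover: "\<And>k. (i, k) \<in> (orientation_arcs \<I> R)\<^sup>+ \<Longrightarrow> (k, j) \<notin> (orientation_arcs \<I> R)\<^sup>+"
  shows "(R, flip_orientation \<I> R i j) \<in> flip_rel \<I>"
proof -
  have oR: "orientation \<I> R" and acyc: "acyclic (orientation_arcs \<I> R)"
    using R by (simp_all add: acyclic_orientation_iff)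
  have "acyclic (orientation_arcs \<I> (flip_orientation \<I> R i j))"
    using finite_orientation_arcs[OF \<I> oR] acyc ij(1) cover orientation_arcs_flip_orientation
    by (rule acyclic_redirect_covering_arc)
  then have "acyclic_orientation \<I> (flip_orientation \<I> R i j)"
    using orientation_flip_orientation[OF oR] by (simp add: acyclic_orientation_iff)
  moreover have "(j, i) \<notin> orientation_arcs \<I> R"
    using acyc ij(1) by (auto dest: acyclic_trancl_rtrancl_not_sym)
  ultimately show ?thesis
    using R increasing_flip_flip_orientation[OF \<I> oR ij(1) _ ij(2)] by (simp add: flip_rel_def)
qed

lemma flip_rel_le:
  assumes "(R, Q) \<in> flip_rel \<I>" "H \<in> \<I>"
  shows "R H \<le> Q H"
proof -
  from assms(1) obtain i j where "i < j" "\<forall>H\<in>\<I>. R H \<noteq> Q H \<longrightarrow> R H = i \<and> Q H = j"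
    unfolding flip_rel_def increasing_flip_def by blast
  with assms(2) show ?thesis by (cases "R H = Q H") auto
qed

lemma flip_rel_sum_less:
  assumes "finite \<I>" "(R, Q) \<in> flip_rel \<I>"
  shows "sum R \<I> < sum Q \<I>"
proof -
  have "R \<noteq> Q" "orientation \<I> R" "orientation \<I> Q"
    using assms(2) by (simp_all add: flip_rel_def increasing_flip_def acyclic_orientation_def)
  then obtain H where "H \<in> \<I>" "R H \<noteq> Q H" using orientation_eqI by blast
  with assms show ?thesis
    using flip_rel_le[OF assms(2)] by (intro sum_strict_mono_ex1) (auto simp: order.strict_iff_order)
qed

lemma flip_rel_rtrancl_le:
  assumes "(R, Q) \<in> (flip_rel \<I>)\<^sup>*" "H \<in> \<I>"
  shows "R H \<le> Q H"
  using assms(1)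
proof induction
  case (step Q Q')
  with flip_rel_le[OF step.hyps(2) assms(2)] show ?case by simp
qed simp

text \<open>An \<open>A\<close>-path from \<open>j\<close> never drops below \<open>i\<close>, since it would pass through \<open>i\<close> and close a
  cycle; so it only uses hyperedges oriented above \<open>i\<close>.\<close>
lemma rtrancl_orientation_arcs_transfer:
  assumes \<I>: "interval_hypergraph n \<I>" and A: "acyclic_orientation \<I> A"
    and agree: "\<And>H. H \<in> \<I> \<Longrightarrow> i < A H \<Longrightarrow> B H = A H"
    and ij: "(i, j) \<in> (orientation_arcs \<I> A)\<^sup>+" "i < j"
    and "(j, y) \<in> (orientation_arcs \<I> A)\<^sup>*"
  shows "(j, y) \<in> (orientation_arcs \<I> B)\<^sup>*"
proof -
  have oA: "orientation \<I> A" and acyc: "acyclic (orientation_arcs \<I> A)"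
    using A by (simp_all add: acyclic_orientation_iff)
  have "(j, y) \<in> (orientation_arcs \<I> B)\<^sup>* \<and> i < y \<and> (i, y) \<in> (orientation_arcs \<I> A)\<^sup>+"
    using assms(6)
  proof induction
    case base
    with ij show ?case by simp
  next
    case (step z w)
    then have z: "(j, z) \<in> (orientation_arcs \<I> B)\<^sup>*" "i < z" "(i, z) \<in> (orientation_arcs \<I> A)\<^sup>+"
      by simp_all
    from step.hyps(2) obtain H where H: "H \<in> \<I>" "A H = z" "w \<in> H" "w \<noteq> z"
      by (rule orientation_arcsE)
    have "(z, w) \<in> orientation_arcs \<I> B"
      using H agree[OF H(1)] z(2) orientation_arcsI[OF H(1,3), of B] by auto
    moreover have iw: "(i, w) \<in> (orientation_arcs \<I> A)\<^sup>+"
      using z(3) step.hyps(2) by (rule trancl_into_trancl)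
    moreover have "i < w"
    proof (rule ccontr)
      assume "\<not> i < w"
      then have "(z, i) \<in> (orientation_arcs \<I> A)\<^sup>*"
        using reaches_between[OF \<I> oA r_into_rtrancl[OF step.hyps(2)], of i] z(2) by simp
      with z(3) acyc show False by (auto dest: acyclic_trancl_rtrancl_not_sym)
    qed
    ultimately show ?case using z(1) by simp
  qed
  then show ?thesis by simp
qed

text \<open>A hyperedge containing \<open>j\<close> that \<open>B\<close> orients at some \<open>d\<close> with \<open>i \<le> d < j\<close> would close a
  cycle \<open>j \<rightarrow>\<^sup>* d \<rightarrow> j\<close> of \<open>B\<close>.\<close>
lemma flip_orientation_le:
  assumes \<I>: "interval_hypergraph n \<I>" and B: "acyclic_orientation \<I> B"
    and le: "\<forall>H\<in>\<I>. A H \<le> B H" and ji: "(j, i) \<in> (orientation_arcs \<I> B)\<^sup>*"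
  shows "\<forall>H\<in>\<I>. flip_orientation \<I> A i j H \<le> B H"
proof -
  have oB: "orientation \<I> B" and acyc: "acyclic (orientation_arcs \<I> B)"
    using B by (simp_all add: acyclic_orientation_iff)
  have "j \<le> B H" if H: "H \<in> \<I>" "A H = i" "j \<in> H" for H
  proof (rule ccontr)
    assume "\<not> j \<le> B H"
    moreover have "i \<le> B H" using le H by force
    ultimately have "(j, B H) \<in> (orientation_arcs \<I> B)\<^sup>*"
      using reaches_between[OF \<I> oB ji, of "B H"] by simp
    moreover have "(B H, j) \<in> orientation_arcs \<I> B"
      using H \<open>\<not> j \<le> B H\<close> orientation_arcsI[OF H(1,3), of B] by auto
    ultimately show False using acyc by (auto dest: acyclic_trancl_rtrancl_not_sym)
  qed
  with le show ?thesis by (simp add: flip_orientation_def)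
qed

lemma exists_flip_rel_below:
  assumes \<I>: "interval_hypergraph n \<I>"
    and A: "acyclic_orientation \<I> A" and B: "acyclic_orientation \<I> B"
    and le: "\<forall>H\<in>\<I>. A H \<le> B H" and "H0 \<in> \<I>" "A H0 < B H0"
  obtains A' where "(A, A') \<in> flip_rel \<I>" "\<forall>H\<in>\<I>. A' H \<le> B H"
proof -
  let ?EA = "orientation_arcs \<I> A" and ?EB = "orientation_arcs \<I> B"
  have oA: "orientation \<I> A" and acycA: "acyclic ?EA" and oB: "orientation \<I> B"
    using A B by (simp_all add: acyclic_orientation_iff)
  define D where "D = {H \<in> \<I>. A H < B H}"
  have D: "finite D" "H0 \<in> D"
    using finite_interval_hypergraph[OF \<I>] assms(5,6) by (simp_all add: D_def)
  define i where "i = Max (A ` D)"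
  have "i \<in> A ` D" unfolding i_def using D by (intro Max_in) auto
  then obtain G where G: "G \<in> \<I>" "A G = i" "i < B G" by (auto simp: D_def)
  have agree: "B H = A H" if "H \<in> \<I>" "i < A H" for H
  proof (rule ccontr)
    assume "B H \<noteq> A H"
    with le that(1) have "H \<in> D" by (force simp: D_def)
    then have "A H \<le> i" unfolding i_def using D(1) by (intro Max_ge) auto
    with that(2) show False by simp
  qed
  have "(i, B G) \<in> ?EA"
    using G oB orientation_arcsI[OF G(1), of "B G" A] by (auto simp: orientation_def)
  then obtain j where ij: "(i, j) \<in> ?EA" "(j, B G) \<in> ?EA\<^sup>*"
    and cover: "\<And>k. (i, k) \<in> ?EA\<^sup>+ \<Longrightarrow> (k, j) \<notin> ?EA\<^sup>+"
    using exists_covering_arc[OF finite_orientation_arcs[OF \<I> oA] acycA] by blast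
  have "i < j"
  proof (rule ccontr)
    assume "\<not> i < j"
    then have "(j, i) \<in> ?EA\<^sup>*"
      using reaches_between[OF \<I> oA ij(2), of i] G(3) by simp
    with ij(1) acycA show False by (auto dest: acyclic_trancl_rtrancl_not_sym)
  qed
  have "(j, B G) \<in> ?EB\<^sup>*"
    using rtrancl_orientation_arcs_transfer[OF \<I> A agree _ \<open>i < j\<close> ij(2)] ij(1) by blast
  moreover have "(B G, i) \<in> ?EB"
    using G oA orientation_arcsI[OF G(1), of i B] by (auto simp: orientation_def)
  ultimately have "(j, i) \<in> ?EB\<^sup>*" by simp
  have "(A, flip_orientation \<I> A i j) \<in> flip_rel \<I>"
    using flip_rel_flip_orientation[OF \<I> A ij(1) \<open>i < j\<close> cover] .
  moreover have "\<forall>H\<in>\<I>. flip_orientation \<I> A i j H \<le> B H"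
    using flip_orientation_le[OF \<I> B le \<open>(j, i) \<in> ?EB\<^sup>*\<close>] .
  ultimately show ?thesis by (rule that)
qed

lemma flip_rel_rtrancl_if_le:
  assumes \<I>: "interval_hypergraph n \<I>" and B: "acyclic_orientation \<I> B"
  shows "acyclic_orientation \<I> A \<Longrightarrow> \<forall>H\<in>\<I>. A H \<le> B H \<Longrightarrow> (A, B) \<in> (flip_rel \<I>)\<^sup>*"
proof (induction "sum B \<I> - sum A \<I>" arbitrary: A rule: less_induct)
  case less
  show ?case
  proof (cases "\<exists>H\<in>\<I>. A H < B H")
    case True
    then obtain A' where A': "(A, A') \<in> flip_rel \<I>" "\<forall>H\<in>\<I>. A' H \<le> B H"
      using exists_flip_rel_below[OF \<I> less.prems(1) B less.prems(2)] by blast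
    have "sum A \<I> < sum A' \<I>"
      using finite_interval_hypergraph[OF \<I>] A'(1) by (rule flip_rel_sum_less)
    moreover have "sum A' \<I> \<le> sum B \<I>" using A'(2) by (simp add: sum_mono)
    ultimately have "(A', B) \<in> (flip_rel \<I>)\<^sup>*"
      using less.hyps A' by (simp add: flip_rel_def)
    with A'(1) show ?thesis by (rule converse_rtrancl_into_rtrancl)
  next
    case False
    with less.prems have "A = B"
      using B orientation_eqI by (force simp: acyclic_orientation_def)
    then show ?thesis by simp
  qed
qed

theorem proposition3p13:
  fixes n :: nat and \<I> :: "nat set set" and A B :: "nat set \<Rightarrow> nat"
  assumes "interval_hypergraph n \<I>"
    and "acyclic_orientation \<I> A" and "acyclic_orientation \<I> B"
  shows "P_le \<I> A B \<longleftrightarrow> (\<forall>I\<in>\<I>. A I \<le> B I)"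
  unfolding P_le_def
  using flip_rel_rtrancl_le flip_rel_rtrancl_if_le[OF assms(1,3,2)] by blast

end
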